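(* Let $(E,\rho)$ be a complete partial $b_v(s)$ metric space and let $S:E\to E$ satisfy $\rho(Su,Sw)\le\lambda\rho(u,w)$ for all $u,w\in E$, where $\lambda\in[0,1)$. Then $S$ has a unique fixed point $b\in E$, and $\rho(b,b)=0$.
   Context: Let $E$ be a nonempty set and $v\in\mathbb{N}$. $(E,\rho)$, with $\rho:E\times E\to[0,\infty)$, is a partial $b_v(s)$ metric space if there is a real $s\ge1$ such that for all $u,w,z_1,\dots,z_v\in E$: (1) $u=w$ iff $\rho(u,u)=\rho(u,w)=\rho(w,w)$; (2) $\rho(u,u)\le\rho(u,w)$; (3) $\rho(u,w)=\rho(w,u)$; (4) $\rho(u,w)\le s[\rho(u,z_1)+\rho(z_1,z_2)+\dots+\rho(z_{v-1},z_v)+\rho(z_v,w)]-\sum_{i=1}^v\rho(z_i,z_i)$. A sequence $\{u_n\}$ in $E$ converges to $u\in E$ if $\lim_{n\to\infty}\rho(u_n,u)=\rho(u,u)$; it is Cauchy if $\lim_{n,m\to\infty}\rho(u_n,u_m)$ exists and is finite. $(E,\rho)$ is complete if for every Cauchy sequence $\{u_n\}$ there is $u\in E$ with $\lim_{n,m\to\infty}\rho(u_n,u_m)=\lim_{n\to\infty}\rho(u_n,u)=\rho(u,u)$. *)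

theory Defs
  imports "HOL-Analysis.Analysis"
begin

definition partial_bv_metric :: "'a set \<Rightarrow> ('a \<Rightarrow> 'a \<Rightarrow> real) \<Rightarrow> nat \<Rightarrow> real \<Rightarrow> bool" where
  "partial_bv_metric E \<rho> v s \<longleftrightarrow>
     E \<noteq> {} \<and> v \<ge> 1 \<and> s \<ge> 1 \<and>
     (\<forall>u\<in>E. \<forall>w\<in>E. \<rho> u w \<ge> 0) \<and>
     (\<forall>u\<in>E. \<forall>w\<in>E. u = w \<longleftrightarrow> (\<rho> u u = \<rho> u w \<and> \<rho> u w = \<rho> w w)) \<and>
     (\<forall>u\<in>E. \<forall>w\<in>E. \<rho> u u \<le> \<rho> u w) \<and>
     (\<forall>u\<in>E. \<forall>w\<in>E. \<rho> u w = \<rho> w u) \<and>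
     (\<forall>u\<in>E. \<forall>w\<in>E. \<forall>z. (\<forall>i\<in>{1..v}. z i \<in> E) \<longrightarrow>
        \<rho> u w \<le> s * (\<rho> u (z 1) + (\<Sum>i=1..<v. \<rho> (z i) (z (Suc i))) + \<rho> (z v) w)
                   - (\<Sum>i=1..v. \<rho> (z i) (z i)))"

definition pbv_converges :: "('a \<Rightarrow> 'a \<Rightarrow> real) \<Rightarrow> (nat \<Rightarrow> 'a) \<Rightarrow> 'a \<Rightarrow> bool" where
  "pbv_converges \<rho> x u \<longleftrightarrow> ((\<lambda>n. \<rho> (x n) u) \<longlonglongrightarrow> \<rho> u u)"

definition pbv_cauchy :: "('a \<Rightarrow> 'a \<Rightarrow> real) \<Rightarrow> (nat \<Rightarrow> 'a) \<Rightarrow> bool" where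
  "pbv_cauchy \<rho> x \<longleftrightarrow>
     (\<exists>L::real. ((\<lambda>(n, m). \<rho> (x n) (x m)) \<longlongrightarrow> L) (sequentially \<times>\<^sub>F sequentially))"

definition pbv_complete :: "'a set \<Rightarrow> ('a \<Rightarrow> 'a \<Rightarrow> real) \<Rightarrow> bool" where
  "pbv_complete E \<rho> \<longleftrightarrow>
     (\<forall>x. (\<forall>n. x n \<in> E) \<longrightarrow> pbv_cauchy \<rho> x \<longrightarrow>
        (\<exists>u\<in>E. ((\<lambda>(n, m). \<rho> (x n) (x m)) \<longlongrightarrow> \<rho> u u) (sequentially \<times>\<^sub>F sequentially)
              \<and> pbv_converges \<rho> x u))"

end

theory Submission
  imports Defs
begin

text \<open>Picard iteration. Iterating the relaxed triangle inequality with all intermediate points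
  equal gives a three-point triangle inequality with constant K = (s v)^2. Choosing k with
  K lam^k < 1, the distance from x to the j-th iterate appears on both sides of that inequality
  with coefficient K lam^k on the right, so the orbit of x is bounded. Contractivity then bounds
  the distance between the n-th and m-th iterates by lam^(min n m) times a constant, so the orbit
  is Cauchy with double limit 0 and, by completeness, converges to some b with self-distance 0.
  The triangle inequality through the iterates forces the distance from S b to b to be 0, hence
  S b = b; uniqueness is immediate from contractivity.\<close>

lemma filterlim_min_prod_sequentially:
  "filterlim (\<lambda>(n, m). min n m) sequentially (sequentially \<times>\<^sub>F sequentially)"
  unfolding filterlim_at_top eventually_prod_sequentially by auto

lemma tendsto_prod_sequentially_zero_if_le_min:
  fixes a :: "nat \<Rightarrow> nat \<Rightarrow> real"
  assumes "f \<longlonglongrightarrow> 0" and "\<And>n m. norm (a n m) \<le> f (min n m)"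
  shows "((\<lambda>(n, m). a n m) \<longlongrightarrow> 0) (sequentially \<times>\<^sub>F sequentially)"
proof (rule Lim_null_comparison)
  show "((\<lambda>(n, m). f (min n m)) \<longlongrightarrow> 0) (sequentially \<times>\<^sub>F sequentially)"
    using filterlim_compose[OF assms(1) filterlim_min_prod_sequentially]
    by (simp add: case_prod_beta')
  show "\<forall>\<^sub>F p in sequentially \<times>\<^sub>F sequentially. norm ((\<lambda>(n, m). a n m) p) \<le> (\<lambda>(n, m). f (min n m)) p"
    using assms(2) by (simp add: case_prod_beta')
qed

locale partial_bv_metric_space =
  fixes E :: "'a set" and \<rho> :: "'a \<Rightarrow> 'a \<Rightarrow> real" and v :: nat and s :: real
  assumes partial_bv_metric: "partial_bv_metric E \<rho> v s"
begin

lemma rho_nonneg: "u \<in> E \<Longrightarrow> w \<in> E \<Longrightarrow> 0 \<le> \<rho> u w"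
  using partial_bv_metric unfolding partial_bv_metric_def by auto

lemma rho_sym: "u \<in> E \<Longrightarrow> w \<in> E \<Longrightarrow> \<rho> u w = \<rho> w u"
  using partial_bv_metric unfolding partial_bv_metric_def by auto

lemma rho_self_le: "u \<in> E \<Longrightarrow> w \<in> E \<Longrightarrow> \<rho> u u \<le> \<rho> u w"
  using partial_bv_metric unfolding partial_bv_metric_def by auto

lemma carrier_nonempty: "E \<noteq> {}"
  using partial_bv_metric unfolding partial_bv_metric_def by (elim conjE)

lemma eq_if_rho_eq: "u \<in> E \<Longrightarrow> w \<in> E \<Longrightarrow> \<rho> u u = \<rho> u w \<Longrightarrow> \<rho> u w = \<rho> w w \<Longrightarrow> u = w"
  using partial_bv_metric unfolding partial_bv_metric_def by auto

lemma eq_if_rho_zero: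
  assumes u: "u \<in> E" and w: "w \<in> E" and uw: "\<rho> u w = 0"
  shows "u = w"
proof (rule eq_if_rho_eq[OF u w])
  show "\<rho> u u = \<rho> u w"
    using rho_self_le[OF u w] rho_nonneg[OF u u] uw by linarith
  show "\<rho> u w = \<rho> w w"
    using rho_self_le[OF w u] rho_nonneg[OF w w] rho_sym[OF u w] uw by linarith
qed

lemma one_le_sv: "1 \<le> s * v"
proof -
  have "1 \<le> s" "1 \<le> real v"
    using partial_bv_metric unfolding partial_bv_metric_def by auto
  then show ?thesis
    using mult_mono[of 1 s 1 "real v"] by simp
qed

lemma rho_relaxed_triangle:
  assumes "u \<in> E" "w \<in> E" "\<And>i. i \<in> {1..v} \<Longrightarrow> z i \<in> E"
  shows "\<rho> u w \<le> s * (\<rho> u (z 1) + (\<Sum>i=1..<v. \<rho> (z i) (z (Suc i))) + \<rho> (z v) w)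
                      - (\<Sum>i=1..v. \<rho> (z i) (z i))"
  using partial_bv_metric assms unfolding partial_bv_metric_def by auto

lemma rho_triangle:
  assumes u: "u \<in> E" and a: "a \<in> E" and w: "w \<in> E"
  shows "\<rho> u w \<le> s * v * (\<rho> u a + \<rho> a w)"
proof -
  have v1: "1 \<le> v" and s1: "1 \<le> s"
    using partial_bv_metric unfolding partial_bv_metric_def by auto
  have "\<rho> u w \<le> s * (\<rho> u a + (v - 1) * \<rho> a a + \<rho> a w) - v * \<rho> a a"
    using rho_relaxed_triangle[OF u w, of "\<lambda>_. a"] a by simp
  also have "\<dots> \<le> s * (\<rho> u a + (v - 1) * \<rho> a a + \<rho> a w)"
    using rho_nonneg[OF a a] by simp
  also have "\<dots> \<le> s * (\<rho> u a + v * \<rho> a w)"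
  proof -
    have "(v - 1) * \<rho> a a \<le> (v - 1) * \<rho> a w"
      using rho_self_le[OF a w] by (simp add: mult_left_mono)
    then show ?thesis
      using v1 s1 by (intro mult_left_mono) (auto simp: of_nat_diff algebra_simps)
  qed
  also have "\<dots> \<le> s * (v * (\<rho> u a + \<rho> a w))"
    using v1 s1 rho_nonneg[OF u a] by (intro mult_left_mono) (auto simp: algebra_simps mult_le_cancel_right1)
  finally show ?thesis
    by (simp add: mult.assoc)
qed

lemma rho_triangle3:
  assumes u: "u \<in> E" and a: "a \<in> E" and b: "b \<in> E" and w: "w \<in> E"
  shows "\<rho> u w \<le> (s * v)\<^sup>2 * (\<rho> u a + \<rho> a b + \<rho> b w)"
proof -
  have "\<rho> u w \<le> s * v * (\<rho> u a + \<rho> a w)"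
    using rho_triangle[OF u a w] .
  also have "\<dots> \<le> s * v * (s * v * \<rho> u a + s * v * (\<rho> a b + \<rho> b w))"
    using rho_triangle[OF a b w] one_le_sv rho_nonneg[OF u a]
    by (intro mult_left_mono add_mono) (auto simp: mult_le_cancel_right1)
  also have "\<dots> = (s * v)\<^sup>2 * (\<rho> u a + \<rho> a b + \<rho> b w)"
    by (simp add: power2_eq_square algebra_simps)
  finally show ?thesis .
qed

end

locale pbv_contraction = partial_bv_metric_space +
  fixes S :: "'a \<Rightarrow> 'a" and lam :: real
  assumes maps_to: "u \<in> E \<Longrightarrow> S u \<in> E"
    and lam_nonneg: "0 \<le> lam" and lam_less_1: "lam < 1"
    and contraction: "u \<in> E \<Longrightarrow> w \<in> E \<Longrightarrow> \<rho> (S u) (S w) \<le> lam * \<rho> u w"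
begin

lemma iterate_in: "x \<in> E \<Longrightarrow> (S ^^ n) x \<in> E"
  by (induction n) (auto intro: maps_to)

lemma rho_iterate_le:
  assumes x: "x \<in> E" and y: "y \<in> E"
  shows "\<rho> ((S ^^ n) x) ((S ^^ n) y) \<le> lam ^ n * \<rho> x y"
proof (induction n)
  case 0
  then show ?case by simp
next
  case (Suc n)
  have "\<rho> ((S ^^ Suc n) x) ((S ^^ Suc n) y) \<le> lam * \<rho> ((S ^^ n) x) ((S ^^ n) y)"
    using contraction[OF iterate_in[OF x] iterate_in[OF y]] by simp
  also have "\<dots> \<le> lam * (lam ^ n * \<rho> x y)"
    using Suc.IH lam_nonneg by (rule mult_left_mono)
  finally show ?case
    by (simp add: mult.assoc)
qed

lemma fixed_point_unique:
  assumes b: "b \<in> E" and c: "c \<in> E" and "S b = b" and "S c = c"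
  shows "b = c"
proof (rule eq_if_rho_zero[OF b c])
  have "\<rho> b c \<le> lam * \<rho> b c"
    using contraction[OF b c] assms by simp
  then show "\<rho> b c = 0"
    using rho_nonneg[OF b c] lam_less_1 by (smt (verit) mult_le_cancel_right1)
qed

lemma orbit_bounded:
  assumes x: "x \<in> E"
  shows "\<exists>M. \<forall>j. \<rho> x ((S ^^ j) x) \<le> M"
proof -
  define K where "K = (s * v)\<^sup>2"
  have "(\<lambda>n. K * lam ^ n) \<longlonglongrightarrow> K * 0"
    using lam_nonneg lam_less_1 by (intro tendsto_mult tendsto_const LIMSEQ_power_zero) auto
  then have "\<forall>\<^sub>F n in sequentially. K * lam ^ n < 1"
    by (intro order_tendstoD) auto
  then obtain k where k: "K * lam ^ k < 1"
    by (auto simp: eventually_sequentially)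
  define C where "C = \<rho> x ((S ^^ k) x)"
  have "\<rho> x ((S ^^ j) x) \<le> 2 * K * C / (1 - K * lam ^ k)" for j
  proof -
    let ?x = "\<lambda>n. (S ^^ n) x"
    have xj: "?x j \<in> E" and xk: "?x k \<in> E" and xjk: "?x (j + k) \<in> E"
      using iterate_in[OF x] by auto
    have "\<rho> (?x k) (?x (j + k)) \<le> lam ^ k * \<rho> x (?x j)"
      using rho_iterate_le[OF x xj, of k] by (metis add.commute comp_apply funpow_add)
    moreover have "\<rho> (?x (j + k)) (?x j) \<le> C"
    proof -
      have "\<rho> (?x (j + k)) (?x j) \<le> lam ^ j * C"
        using rho_iterate_le[OF xk x, of j] rho_sym[OF x xk]
        by (simp add: C_def funpow_add add.commute)
      also have "\<dots> \<le> C"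
        using lam_nonneg lam_less_1 rho_nonneg[OF x xk] unfolding C_def
        by (simp add: mult_left_le_one_le power_le_one)
      finally show ?thesis .
    qed
    ultimately have "\<rho> x (?x j) \<le> K * (C + lam ^ k * \<rho> x (?x j) + C)"
      using rho_triangle3[OF x xk xjk xj] unfolding K_def C_def
      by (smt (verit) mult_left_mono zero_le_power2)
    then have "(1 - K * lam ^ k) * \<rho> x (?x j) \<le> 2 * K * C"
      by (simp add: algebra_simps)
    then show ?thesis
      using k by (simp add: pos_le_divide_eq mult.commute)
  qed
  then show ?thesis by blast
qed

lemma orbit_rho_le:
  assumes x: "x \<in> E"
  obtains M where "\<And>n m. \<rho> ((S ^^ n) x) ((S ^^ m) x) \<le> lam ^ min n m * M"
proof -
  obtain M where M: "\<And>j. \<rho> x ((S ^^ j) x) \<le> M"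
    using orbit_bounded[OF x] by blast
  have le: "\<rho> ((S ^^ n) x) ((S ^^ m) x) \<le> lam ^ n * M" if "n \<le> m" for n m
  proof -
    have "(S ^^ m) x = (S ^^ n) ((S ^^ (m - n)) x)"
      using that by (metis le_add_diff_inverse funpow_add comp_apply)
    then have "\<rho> ((S ^^ n) x) ((S ^^ m) x) \<le> lam ^ n * \<rho> x ((S ^^ (m - n)) x)"
      using rho_iterate_le[OF x iterate_in[OF x]] by simp
    also have "\<dots> \<le> lam ^ n * M"
      using M lam_nonneg by (intro mult_left_mono) auto
    finally show ?thesis .
  qed
  have "\<rho> ((S ^^ n) x) ((S ^^ m) x) \<le> lam ^ min n m * M" for n m
    using le[of n m] le[of m n] rho_sym[OF iterate_in[OF x] iterate_in[OF x]]
    by (cases "n \<le> m") (auto simp: min_def)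
  then show ?thesis by (rule that)
qed

lemma orbit_rho_tendsto_zero:
  assumes x: "x \<in> E"
  shows "((\<lambda>(n, m). \<rho> ((S ^^ n) x) ((S ^^ m) x)) \<longlongrightarrow> 0) (sequentially \<times>\<^sub>F sequentially)"
proof -
  obtain M where M: "\<And>n m. \<rho> ((S ^^ n) x) ((S ^^ m) x) \<le> lam ^ min n m * M"
    using orbit_rho_le[OF x] by blast
  have "(\<lambda>n. lam ^ n * M) \<longlonglongrightarrow> 0 * M"
    using lam_nonneg lam_less_1 by (intro tendsto_mult tendsto_const LIMSEQ_power_zero) auto
  then show ?thesis
    using M rho_nonneg[OF iterate_in[OF x] iterate_in[OF x]]
    by (intro tendsto_prod_sequentially_zero_if_le_min) auto
qed

lemma fixed_point_if_orbit_tendsto: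
  assumes x: "x \<in> E" and b: "b \<in> E" and lim: "(\<lambda>n. \<rho> ((S ^^ n) x) b) \<longlonglongrightarrow> 0"
  shows "S b = b"
proof (rule eq_if_rho_zero[OF maps_to[OF b] b])
  have "\<rho> (S b) b \<le> s * v * (lam * \<rho> ((S ^^ n) x) b + \<rho> ((S ^^ Suc n) x) b)" for n
  proof -
    have xn: "(S ^^ n) x \<in> E" and xSn: "(S ^^ Suc n) x \<in> E"
      using iterate_in[OF x] by blast+
    have "\<rho> (S b) ((S ^^ Suc n) x) \<le> lam * \<rho> ((S ^^ n) x) b"
      using contraction[OF b xn] rho_sym[OF b xn] by simp
    then show ?thesis
      using rho_triangle[OF maps_to[OF b] xSn b] one_le_sv
      by (smt (verit) mult_left_mono)
  qed
  moreover have "(\<lambda>n. s * v * (lam * \<rho> ((S ^^ n) x) b + \<rho> ((S ^^ Suc n) x) b)) \<longlonglongrightarrow> s * v * (lam * 0 + 0)"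
    using lim by (intro tendsto_intros LIMSEQ_Suc)
  ultimately have "\<rho> (S b) b \<le> 0"
    by (intro LIMSEQ_le_const) auto
  then show "\<rho> (S b) b = 0"
    using rho_nonneg[OF maps_to[OF b] b] by simp
qed

lemma fixed_point_exists:
  assumes complete: "pbv_complete E \<rho>"
  shows "\<exists>b\<in>E. S b = b \<and> \<rho> b b = 0"
proof -
  obtain x where x: "x \<in> E"
    using carrier_nonempty by blast
  have lim0: "((\<lambda>(n, m). \<rho> ((S ^^ n) x) ((S ^^ m) x)) \<longlongrightarrow> 0) (sequentially \<times>\<^sub>F sequentially)"
    using orbit_rho_tendsto_zero[OF x] .
  then have "pbv_cauchy \<rho> (\<lambda>n. (S ^^ n) x)"
    unfolding pbv_cauchy_def by blast
  then obtain b where b: "b \<in> E"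
    and lim_bb: "((\<lambda>(n, m). \<rho> ((S ^^ n) x) ((S ^^ m) x)) \<longlongrightarrow> \<rho> b b) (sequentially \<times>\<^sub>F sequentially)"
    and conv: "pbv_converges \<rho> (\<lambda>n. (S ^^ n) x) b"
    using complete[unfolded pbv_complete_def, rule_format, of "\<lambda>n. (S ^^ n) x"] iterate_in[OF x]
    by blast
  have bb: "\<rho> b b = 0"
    using tendsto_unique[OF _ lim_bb lim0] by (simp add: prod_filter_eq_bot)
  have "S b = b"
    using fixed_point_if_orbit_tendsto[OF x b] conv bb unfolding pbv_converges_def by simp
  with b bb show ?thesis by blast
qed

end

theorem mainTheorem2:
  fixes E :: "'a set" and \<rho> :: "'a \<Rightarrow> 'a \<Rightarrow> real" and v :: nat and s lam :: real
    and S :: "'a \<Rightarrow> 'a"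
  assumes "partial_bv_metric E \<rho> v s"
    and "pbv_complete E \<rho>"
    and "\<forall>u\<in>E. S u \<in> E"
    and "0 \<le> lam" and "lam < 1"
    and "\<forall>u\<in>E. \<forall>w\<in>E. \<rho> (S u) (S w) \<le> lam * \<rho> u w"
  shows "\<exists>b\<in>E. S b = b \<and> \<rho> b b = 0 \<and> (\<forall>c\<in>E. S c = c \<longrightarrow> c = b)"
proof -
  interpret pbv_contraction E \<rho> v s S lam
    using assms by unfold_locales auto
  obtain b where b: "b \<in> E" "S b = b" "\<rho> b b = 0"
    using fixed_point_exists[OF assms(2)] by blast
  have "c = b" if "c \<in> E" "S c = c" for c
    using fixed_point_unique[OF that(1) b(1) that(2) b(2)] .
  with b show ?thesis by blast
qed

end
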